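(* Let $(I_t)_{t\in\mathbb{Z}}$ be a stochastic process such that there exists a family $(I_t^n)_{t\in\mathbb{Z}}$, $n\in\mathbb{N}$, of $\{0,1\}$-valued stationary stochastic processes with $P(I_0^n=1)>0$ for all $n\in\mathbb{N}$ and $$\mathcal{L}\bigl((I_t^n)_{t\in\{-u,\dots,v\}}\mid I_0^n=1\bigr)\Longrightarrow \mathcal{L}\bigl((I_t)_{t\in\{-u,\dots,v\}}\bigr)\quad (n\to\infty)$$ (weak convergence) for all $u,v\in\mathbb{N}$. Let $A\subset\mathbb{Z}$ with $0\in A$. Then $$P(I_t=1,\ t\in A)=P(I_{t-a}=1,\ t\in A)\quad\text{for all } a\in A.$$
   Context: $\mathcal{L}(\cdot\mid\cdot)$ denotes conditional law and $\Longrightarrow$ convergence in distribution. $\mathbb{N}=\{1,2,\dots\}$. *)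

theory Defs
  imports "HOL-Probability.Probability"
begin

text \<open>Finite-dimensional windows of a process, embedded in int => real (product topology),
  with value 0 outside the window.\<close>
definition window :: "int set \<Rightarrow> (int \<Rightarrow> 'a \<Rightarrow> real) \<Rightarrow> 'a \<Rightarrow> (int \<Rightarrow> real)" where
  "window T X = (\<lambda>\<omega> t. if t \<in> T then X t \<omega> else 0)"

definition weak_conv_fun :: "(nat \<Rightarrow> (int \<Rightarrow> real) measure) \<Rightarrow> (int \<Rightarrow> real) measure \<Rightarrow> bool" where
  "weak_conv_fun \<mu>s \<mu> \<longleftrightarrow>
     (\<forall>f :: (int \<Rightarrow> real) \<Rightarrow> real. continuous_on UNIV f \<and> bounded (range f) \<longrightarrow>
        (\<lambda>n. \<integral>x. f x \<partial>\<mu>s n) \<longlonglongrightarrow> (\<integral>x. f x \<partial>\<mu>))"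

definition law :: "'a measure \<Rightarrow> ('a \<Rightarrow> (int \<Rightarrow> real)) \<Rightarrow> (int \<Rightarrow> real) measure" where
  "law M Y = distr M borel Y"

definition cond_law :: "'a measure \<Rightarrow> ('a \<Rightarrow> (int \<Rightarrow> real)) \<Rightarrow> 'a set \<Rightarrow> (int \<Rightarrow> real) measure" where
  "cond_law M Y E = distr (uniform_measure M E) borel Y"

definition stationary :: "'a measure \<Rightarrow> (int \<Rightarrow> 'a \<Rightarrow> real) \<Rightarrow> bool" where
  "stationary M X \<longleftrightarrow> (\<forall>h::int. distr M borel (\<lambda>\<omega> t. X (t + h) \<omega>) = distr M borel (\<lambda>\<omega> t. X t \<omega>))"

end

theory Submission
  imports Defs
begin

text \<open>
  For a finite set \<open>B\<close> containing \<open>0\<close>, the probability that \<open>I \<equiv> 1\<close> on \<open>B\<close> is the limit of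
  \<open>P(I\<^sup>n \<equiv> 1 on B | I\<^sup>n\<^sub>0 = 1) = P(I\<^sup>n \<equiv> 1 on B) / P(I\<^sup>n\<^sub>0 = 1)\<close>: weak convergence forces the
  limit process to be \<open>{0,1}\<close>-valued, and on \<open>{0,1}\<close>-valued paths the indicator of the cylinder
  agrees with a bounded continuous function of the window. If also \<open>a \<in> B\<close>, then \<open>B - a\<close> still
  contains \<open>0\<close>, and by stationarity of \<open>I\<^sup>n\<close> the numerators for \<open>B\<close> and \<open>B - a\<close> coincide, so the
  two limits agree. An arbitrary \<open>A\<close> is handled by truncating to \<open>A \<inter> [-k, k]\<close> and continuity of
  measure from above.
\<close>

lemma measurable_window:
  assumes "\<And>t. X t \<in> borel_measurable M"
  shows "window T X \<in> borel_measurable M"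
  unfolding window_def
proof (rule measurable_coordinatewise_then_product)
  show "(\<lambda>\<omega>. if t \<in> T then X t \<omega> else 0) \<in> borel_measurable M" for t
    using assms by (cases "t \<in> T") simp_all
qed

lemma prod_zero_one:
  fixes y :: "'i \<Rightarrow> real"
  assumes "finite C" "\<And>t. t \<in> C \<Longrightarrow> y t \<in> {0, 1}"
  shows "(\<Prod>t\<in>C. y t) = (if \<forall>t\<in>C. y t = 1 then 1 else 0)"
proof (cases "\<forall>t\<in>C. y t = 1")
  case False
  then obtain t where "t \<in> C" "y t = 0" using assms(2) by blast
  with assms(1) show ?thesis by auto
qed simp

lemma stationary_measure_all_eq_1_shift:
  fixes X :: "int \<Rightarrow> 'a \<Rightarrow> real"
  assumes "stationary M X" and X: "\<And>t. X t \<in> borel_measurable M"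
  shows "measure M {\<omega> \<in> space M. \<forall>t\<in>B. X (t + h) \<omega> = 1}
       = measure M {\<omega> \<in> space M. \<forall>t\<in>B. X t \<omega> = 1}"
proof -
  define C where "C = {x :: int \<Rightarrow> real. \<forall>t\<in>B. x t = 1}"
  have C: "C \<in> sets borel"
    unfolding C_def by measurable
  have shift: "(\<lambda>\<omega> t. X (t + k) \<omega>) \<in> borel_measurable M" for k
    by (rule measurable_coordinatewise_then_product) (simp add: X)
  have process: "(\<lambda>\<omega> t. X t \<omega>) \<in> borel_measurable M"
    using shift[of 0] by simp
  have "measure (distr M borel (\<lambda>\<omega> t. X (t + h) \<omega>)) C = measure (distr M borel (\<lambda>\<omega> t. X t \<omega>)) C"
    using assms(1) by (simp add: stationary_def)
  then show ?thesis
    unfolding measure_distr[OF shift C] measure_distr[OF process C]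
    by (simp add: C_def vimage_def Int_def conj_commute)
qed

lemma weak_conv_fun_integral_tendsto:
  fixes Y :: "'a \<Rightarrow> int \<Rightarrow> real" and Yn :: "nat \<Rightarrow> 'b \<Rightarrow> int \<Rightarrow> real"
    and f :: "(int \<Rightarrow> real) \<Rightarrow> real"
  assumes "weak_conv_fun (\<lambda>n. distr (P n) borel (Yn n)) (distr M borel Y)"
    and Yn: "\<And>n. Yn n \<in> borel_measurable (P n)" and Y: "Y \<in> borel_measurable M"
    and f: "continuous_on UNIV f" "bounded (range f)"
  shows "(\<lambda>n. \<integral>\<omega>. f (Yn n \<omega>) \<partial>P n) \<longlonglongrightarrow> (\<integral>\<omega>. f (Y \<omega>) \<partial>M)"
proof -
  have "(\<lambda>n. \<integral>x. f x \<partial>distr (P n) borel (Yn n)) \<longlonglongrightarrow> (\<integral>x. f x \<partial>distr M borel Y)"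
    using assms(1) f unfolding weak_conv_fun_def by blast
  then show ?thesis
    using Yn Y borel_measurable_continuous_onI[OF f(1)] by (simp add: integral_distr)
qed

lemma (in finite_measure) tendsto_measure_all_truncated:
  assumes "\<And>t. Measurable.pred M (Q t)"
  shows "(\<lambda>k. measure M {\<omega> \<in> space M. \<forall>t\<in>A \<inter> {- int k..int k}. Q t \<omega>})
           \<longlonglongrightarrow> measure M {\<omega> \<in> space M. \<forall>t\<in>A. Q t \<omega>}"
proof -
  define S where "S k = {\<omega> \<in> space M. \<forall>t\<in>A \<inter> {- int k..int k}. Q t \<omega>}" for k
  have S_sets: "S k \<in> sets M" for k
    unfolding S_def using assms by measurable
  have "decseq S"
    unfolding S_def decseq_def by auto
  then have "(\<lambda>k. measure M (S k)) \<longlonglongrightarrow> measure M (\<Inter>k. S k)"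
    using S_sets by (intro finite_Lim_measure_decseq) auto
  also have "(\<Inter>k. S k) = {\<omega> \<in> space M. \<forall>t\<in>A. Q t \<omega>}"
  proof (intro equalityI subsetI)
    fix \<omega> assume \<omega>: "\<omega> \<in> (\<Inter>k. S k)"
    have "Q t \<omega>" if "t \<in> A" for t
    proof -
      from \<omega> have "\<omega> \<in> S (nat \<bar>t\<bar>)" by blast
      moreover have "t \<in> A \<inter> {- int (nat \<bar>t\<bar>)..int (nat \<bar>t\<bar>)}" using that by auto
      ultimately show ?thesis unfolding S_def by blast
    qed
    with \<omega> show "\<omega> \<in> {\<omega> \<in> space M. \<forall>t\<in>A. Q t \<omega>}" by (auto simp: S_def)
  qed (auto simp: S_def)
  finally show ?thesis
    unfolding S_def .
qed

lemma AE_zero_one_weak_limit: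
  fixes I :: "int \<Rightarrow> 'a \<Rightarrow> real" and X :: "nat \<Rightarrow> int \<Rightarrow> 'b \<Rightarrow> real"
  assumes M: "prob_space M" and I: "\<And>t. I t \<in> borel_measurable M"
    and X: "\<And>n t. X n t \<in> borel_measurable (P n)"
    and X01: "\<And>n t \<omega>. \<omega> \<in> space (P n) \<Longrightarrow> X n t \<omega> \<in> {0, 1}"
    and conv: "weak_conv_fun (\<lambda>n. distr (P n) borel (window T (X n))) (distr M borel (window T I))"
    and t: "t \<in> T"
  shows "AE \<omega> in M. I t \<omega> \<in> {0, 1}"
proof -
  interpret prob_space M by (fact M)
  \<comment> \<open>\<open>h \<ge> 0\<close> is continuous, bounded, and vanishes exactly where \<open>x t \<in> {0, 1}\<close>\<close>
  define h where "h x = min 1 \<bar>x t * (x t - 1)\<bar>" for x :: "int \<Rightarrow> real"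
  have h_cont: "continuous_on UNIV h"
    unfolding h_def by (intro continuous_intros continuous_on_product_coordinates)
  have h_bdd: "bounded (range h)"
    unfolding h_def bounded_iff by (intro exI[of _ 1]) auto
  have "(\<lambda>n. \<integral>\<omega>. h (window T (X n) \<omega>) \<partial>P n) \<longlonglongrightarrow> (\<integral>\<omega>. h (window T I \<omega>) \<partial>M)"
    using conv measurable_window[OF X] measurable_window[OF I] h_cont h_bdd
    by (rule weak_conv_fun_integral_tendsto)
  moreover have "(\<integral>\<omega>. h (window T (X n) \<omega>) \<partial>P n) = 0" for n
  proof -
    have "h (window T (X n) \<omega>) = 0" if "\<omega> \<in> space (P n)" for \<omega>
      using X01[OF that, of t] t by (auto simp: h_def window_def)
    then have "(\<integral>\<omega>. h (window T (X n) \<omega>) \<partial>P n) = (\<integral>\<omega>. 0 \<partial>P n)"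
      by (intro Bochner_Integration.integral_cong) auto
    then show ?thesis by simp
  qed
  ultimately have "(\<integral>\<omega>. h (window T I \<omega>) \<partial>M) = 0"
    by (simp add: LIMSEQ_const_iff)
  moreover have "integrable M (\<lambda>\<omega>. h (window T I \<omega>))"
  proof (rule integrable_const_bound[where B=1])
    show "(\<lambda>\<omega>. h (window T I \<omega>)) \<in> borel_measurable M"
      by (rule measurable_compose[OF measurable_window[OF I] borel_measurable_continuous_onI[OF h_cont]])
  qed (auto simp: h_def)
  ultimately have "AE \<omega> in M. h (window T I \<omega>) = 0"
    by (subst (asm) integral_nonneg_eq_0_iff_AE) (auto simp: h_def)
  then show ?thesis
  proof eventually_elim
    case (elim \<omega>)
    then have "\<bar>I t \<omega> * (I t \<omega> - 1)\<bar> = 0"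
      using t by (simp add: h_def window_def min_def split: if_splits)
    then show ?case by simp
  qed
qed

lemma tendsto_measure_all_eq_1_weak_limit:
  fixes I :: "int \<Rightarrow> 'a \<Rightarrow> real" and X :: "nat \<Rightarrow> int \<Rightarrow> 'b \<Rightarrow> real"
  assumes M: "prob_space M" and I: "\<And>t. I t \<in> borel_measurable M"
    and X: "\<And>n t. X n t \<in> borel_measurable (P n)"
    and X01: "\<And>n t \<omega>. \<omega> \<in> space (P n) \<Longrightarrow> X n t \<omega> \<in> {0, 1}"
    and conv: "weak_conv_fun (\<lambda>n. distr (P n) borel (window T (X n))) (distr M borel (window T I))"
    and C: "finite C" "C \<subseteq> T"
  shows "(\<lambda>n. measure (P n) {\<omega> \<in> space (P n). \<forall>t\<in>C. X n t \<omega> = 1})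
           \<longlonglongrightarrow> measure M {\<omega> \<in> space M. \<forall>t\<in>C. I t \<omega> = 1}"
proof -
  \<comment> \<open>a continuous version of the cylinder indicator, exact on \<open>{0,1}\<close>-valued paths\<close>
  define F where "F x = max 0 (min 1 (\<Prod>t\<in>C. x t))" for x :: "int \<Rightarrow> real"
  have F_cont: "continuous_on UNIV F"
    unfolding F_def by (intro continuous_intros continuous_on_product_coordinates)
  have F_bdd: "bounded (range F)"
    unfolding F_def bounded_iff by (intro exI[of _ 1]) auto
  have F_window: "F (window T Y \<omega>) = indicator {\<omega>. \<forall>t\<in>C. Y t \<omega> = 1} \<omega>"
    if "\<And>t. t \<in> C \<Longrightarrow> Y t \<omega> \<in> {0, 1}" for Y :: "int \<Rightarrow> 'c \<Rightarrow> real" and \<omega>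
  proof -
    have "(\<Prod>t\<in>C. window T Y \<omega> t) = (\<Prod>t\<in>C. Y t \<omega>)"
      using C(2) by (intro prod.cong) (auto simp: window_def)
    then show ?thesis
      using prod_zero_one[OF C(1) that] by (simp add: F_def)
  qed
  have "(\<integral>\<omega>. F (window T (X n) \<omega>) \<partial>P n) = measure (P n) {\<omega> \<in> space (P n). \<forall>t\<in>C. X n t \<omega> = 1}" for n
  proof -
    have "(\<integral>\<omega>. F (window T (X n) \<omega>) \<partial>P n) = (\<integral>\<omega>. indicator {\<omega>. \<forall>t\<in>C. X n t \<omega> = 1} \<omega> \<partial>P n)"
      using X01 by (intro Bochner_Integration.integral_cong F_window) auto
    then show ?thesis
      by (simp add: Int_def conj_commute)
  qed
  moreover have "(\<integral>\<omega>. F (window T I \<omega>) \<partial>M) = measure M {\<omega> \<in> space M. \<forall>t\<in>C. I t \<omega> = 1}"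
  proof -
    have "AE \<omega> in M. \<forall>t\<in>C. I t \<omega> \<in> {0, 1}"
      using C by (intro AE_finite_allI AE_zero_one_weak_limit[OF M I X X01 conv]) auto
    then have "AE \<omega> in M. F (window T I \<omega>) = indicator {\<omega>. \<forall>t\<in>C. I t \<omega> = 1} \<omega>"
      by eventually_elim (simp add: F_window)
    then have "(\<integral>\<omega>. F (window T I \<omega>) \<partial>M) = (\<integral>\<omega>. indicator {\<omega>. \<forall>t\<in>C. I t \<omega> = 1} \<omega> \<partial>M)"
    proof (rule integral_cong_AE[rotated 2])
      show "(\<lambda>\<omega>. F (window T I \<omega>)) \<in> borel_measurable M"
        by (rule measurable_compose[OF measurable_window[OF I] borel_measurable_continuous_onI[OF F_cont]])
      have "{\<omega> \<in> space M. \<forall>t\<in>C. I t \<omega> = 1} \<in> sets M"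
        using C(1) I by measurable
      then show "indicator {\<omega>. \<forall>t\<in>C. I t \<omega> = 1} \<in> borel_measurable M"
        by (simp add: borel_measurable_indicator_iff Int_def conj_commute)
    qed
    then show ?thesis
      by (simp add: Int_def conj_commute)
  qed
  ultimately show ?thesis
    using weak_conv_fun_integral_tendsto[OF conv measurable_window[OF X] measurable_window[OF I] F_cont F_bdd]
    by simp
qed

lemma cond_weak_limit_shift_invariant_finite:
  fixes M :: "'a measure" and I :: "int \<Rightarrow> 'a \<Rightarrow> real"
    and N :: "nat \<Rightarrow> 'b measure" and X :: "nat \<Rightarrow> int \<Rightarrow> 'b \<Rightarrow> real"
  assumes M: "prob_space M" and I: "\<And>t. I t \<in> borel_measurable M"
    and N: "\<And>n. prob_space (N n)"
    and X: "\<And>n t. X n t \<in> borel_measurable (N n)"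
    and X01: "\<And>n t \<omega>. \<omega> \<in> space (N n) \<Longrightarrow> X n t \<omega> \<in> {0, 1}"
    and X_stat: "\<And>n. stationary (N n) (X n)"
    and X_pos: "\<And>n. measure (N n) {\<omega> \<in> space (N n). X n 0 \<omega> = 1} > 0"
    and conv: "weak_conv_fun
       (\<lambda>n. cond_law (N n) (window T (X n)) {\<omega> \<in> space (N n). X n 0 \<omega> = 1})
       (law M (window T I))"
    and B: "finite B" "0 \<in> B" "a \<in> B" "B \<subseteq> T" "(\<lambda>t. t - a) ` B \<subseteq> T"
  shows "measure M {\<omega> \<in> space M. \<forall>t\<in>B. I t \<omega> = 1}
       = measure M {\<omega> \<in> space M. \<forall>t\<in>B. I (t - a) \<omega> = 1}"
proof -
  define E where "E n = {\<omega> \<in> space (N n). X n 0 \<omega> = 1}" for n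
  define P where "P n = uniform_measure (N n) (E n)" for n
  have E_pos: "emeasure (N n) (E n) \<noteq> 0" for n
    using X_pos[of n] by (auto simp: E_def measure_def)
  have E_fin: "emeasure (N n) (E n) \<noteq> \<infinity>" for n
    using N[of n] by (simp add: prob_space_def finite_measure.emeasure_finite)
  have X_P: "X n t \<in> borel_measurable (P n)" for n t
    unfolding P_def by (subst measurable_cong_sets[OF sets_uniform_measure refl]) (rule X)
  have X01_P: "\<omega> \<in> space (P n) \<Longrightarrow> X n t \<omega> \<in> {0, 1}" for n t \<omega>
    using X01 by (simp add: P_def)
  have P_conv: "weak_conv_fun (\<lambda>n. distr (P n) borel (window T (X n))) (distr M borel (window T I))"
    using conv unfolding cond_law_def law_def P_def E_def .
  have cond_tendsto: "(\<lambda>n. measure (N n) {\<omega> \<in> space (N n). \<forall>t\<in>C. X n t \<omega> = 1} / measure (N n) (E n))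
      \<longlonglongrightarrow> measure M {\<omega> \<in> space M. \<forall>t\<in>C. I t \<omega> = 1}"
    if C: "finite C" "C \<subseteq> T" "0 \<in> C" for C
  proof -
    have "measure (P n) {\<omega> \<in> space (P n). \<forall>t\<in>C. X n t \<omega> = 1}
        = measure (N n) {\<omega> \<in> space (N n). \<forall>t\<in>C. X n t \<omega> = 1} / measure (N n) (E n)" for n
    proof -
      have "{\<omega> \<in> space (N n). \<forall>t\<in>C. X n t \<omega> = 1} \<in> sets (N n)"
        using C(1) X by measurable
      moreover have "E n \<inter> {\<omega> \<in> space (N n). \<forall>t\<in>C. X n t \<omega> = 1} = {\<omega> \<in> space (N n). \<forall>t\<in>C. X n t \<omega> = 1}"
        using C(3) by (auto simp: E_def)
      ultimately show ?thesis
        using E_pos E_fin by (simp add: P_def)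
    qed
    then show ?thesis
      using tendsto_measure_all_eq_1_weak_limit[OF M I X_P X01_P P_conv C(1,2)] by simp
  qed
  have shift_sets: "{\<omega> \<in> space K. \<forall>t\<in>(\<lambda>t. t - a) ` B. Y t \<omega> = 1} = {\<omega> \<in> space K. \<forall>t\<in>B. Y (t - a) \<omega> = 1}"
    for K :: "'c measure" and Y :: "int \<Rightarrow> 'c \<Rightarrow> real"
    by auto
  have "measure (N n) {\<omega> \<in> space (N n). \<forall>t\<in>B. X n (t - a) \<omega> = 1}
      = measure (N n) {\<omega> \<in> space (N n). \<forall>t\<in>B. X n t \<omega> = 1}" for n
    using stationary_measure_all_eq_1_shift[OF X_stat X, of n B "- a"] by simp
  then have "(\<lambda>n. measure (N n) {\<omega> \<in> space (N n). \<forall>t\<in>B. X n t \<omega> = 1} / measure (N n) (E n))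
      \<longlonglongrightarrow> measure M {\<omega> \<in> space M. \<forall>t\<in>B. I (t - a) \<omega> = 1}"
    using cond_tendsto[of "(\<lambda>t. t - a) ` B"] B by (simp add: shift_sets image_subset_iff)
  with cond_tendsto[of B] B show ?thesis
    using LIMSEQ_unique by blast
qed

theorem theorem2p1:
  fixes M :: "'a measure" and I :: "int \<Rightarrow> 'a \<Rightarrow> real"
    and Mn :: "nat \<Rightarrow> 'b measure" and In :: "nat \<Rightarrow> int \<Rightarrow> 'b \<Rightarrow> real"
    and A :: "int set" and a :: int
  assumes M: "prob_space M"
    and I_rv: "\<And>t. I t \<in> borel_measurable M"
    and Mn: "\<And>n. n \<ge> 1 \<Longrightarrow> prob_space (Mn n)"
    and In_rv: "\<And>n t. n \<ge> 1 \<Longrightarrow> In n t \<in> borel_measurable (Mn n)"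
    and In_01: "\<And>n t \<omega>. n \<ge> 1 \<Longrightarrow> \<omega> \<in> space (Mn n) \<Longrightarrow> In n t \<omega> \<in> {0, 1}"
    and In_stat: "\<And>n. n \<ge> 1 \<Longrightarrow> stationary (Mn n) (In n)"
    and In_pos: "\<And>n. n \<ge> 1 \<Longrightarrow> measure (Mn n) {\<omega> \<in> space (Mn n). In n 0 \<omega> = 1} > 0"
    and conv: "\<And>u v :: nat. u \<ge> 1 \<Longrightarrow> v \<ge> 1 \<Longrightarrow>
       weak_conv_fun
         (\<lambda>n. cond_law (Mn (n + 1)) (window {- int u..int v} (In (n + 1)))
                 {\<omega> \<in> space (Mn (n + 1)). In (n + 1) 0 \<omega> = 1})
         (law M (window {- int u..int v} I))"
    and A0: "0 \<in> A"
    and aA: "a \<in> A"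
  shows "measure M {\<omega> \<in> space M. \<forall>t\<in>A. I t \<omega> = 1}
       = measure M {\<omega> \<in> space M. \<forall>t\<in>A. I (t - a) \<omega> = 1}"
proof -
  interpret prob_space M by (fact M)
  have truncated_eq: "measure M {\<omega> \<in> space M. \<forall>t\<in>A \<inter> {- int k..int k}. I t \<omega> = 1}
      = measure M {\<omega> \<in> space M. \<forall>t\<in>A \<inter> {- int k..int k}. I (t - a) \<omega> = 1}"
    if "nat \<bar>a\<bar> \<le> k" for k
  proof -
    define u where "u = k + nat \<bar>a\<bar> + 1"
    have u: "u \<ge> 1" by (simp add: u_def)
    show ?thesis
      using Mn In_rv In_01 In_stat In_pos that A0 aA
      by (intro cond_weak_limit_shift_invariant_finite[OF M I_rv _ _ _ _ _ conv[OF u u]])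
         (auto simp: u_def)
  qed
  have "(\<lambda>k. measure M {\<omega> \<in> space M. \<forall>t\<in>A \<inter> {- int k..int k}. I (t - a) \<omega> = 1})
      \<longlonglongrightarrow> measure M {\<omega> \<in> space M. \<forall>t\<in>A. I (t - a) \<omega> = 1}"
    using I_rv by (intro tendsto_measure_all_truncated) measurable
  then have "(\<lambda>k. measure M {\<omega> \<in> space M. \<forall>t\<in>A \<inter> {- int k..int k}. I t \<omega> = 1})
      \<longlonglongrightarrow> measure M {\<omega> \<in> space M. \<forall>t\<in>A. I (t - a) \<omega> = 1}"
    by (rule Lim_transform_eventually)
       (use eventually_ge_at_top[of "nat \<bar>a\<bar>"] in \<open>eventually_elim, simp add: truncated_eq\<close>)
  moreover have "(\<lambda>k. measure M {\<omega> \<in> space M. \<forall>t\<in>A \<inter> {- int k..int k}. I t \<omega> = 1})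
      \<longlonglongrightarrow> measure M {\<omega> \<in> space M. \<forall>t\<in>A. I t \<omega> = 1}"
    using I_rv by (intro tendsto_measure_all_truncated) measurable
  ultimately show ?thesis
    using LIMSEQ_unique by blast
qed

end
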